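(* Let $S$ be a polynomial ring over a field $k$, let $x$ be a variable of $S$, and let $R = S/(x)$, identified with the polynomial ring in the remaining variables. Let $I$ be a squarefree monomial ideal in $S$ and let $xF_1, \ldots, xF_n$ be the minimal monomial generators of $I$ divisible by $x$. Let $H = (I:x)/I$, regarded as an $R$-module, with generators the images of $F_1,\dots,F_n$. Let $N$ be the block diagonal matrix whose $i$-th block is the row matrix consisting of the minimal monomial generators of $I:F_i$ (over $R$), and let $P$ be the matrix whose columns are the minimal syzygies of the ideal $(F_1,\ldots,F_n)$ of $R$. Then the block matrix $M = (N \mid P)$ is a presentation matrix for $H$ (with respect to the surjection $R^n \to H$ sending the $i$-th basis vector to the class of $F_i$).
   Context: A presentation matrix for an $R$-module $H$ with respect to a surjection $R^n \to H$ is a matrix whose columns generate the kernel of that surjection. *)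

theory Defs
  imports "HOL-Library.Poly_Mapping"
begin

text \<open>Polynomial ring k[variables 'v]: polynomials are finitely supported maps from
monomials (exponent vectors 'v =>0 nat) to coefficients in k.\<close>

type_synonym ('v, 'k) mpoly = "('v \<Rightarrow>\<^sub>0 nat) \<Rightarrow>\<^sub>0 'k"

definition mono :: "('v \<Rightarrow>\<^sub>0 nat) \<Rightarrow> ('v, 'k::field) mpoly" where
  "mono m = Poly_Mapping.single m 1"

definition mdvd :: "('v \<Rightarrow>\<^sub>0 nat) \<Rightarrow> ('v \<Rightarrow>\<^sub>0 nat) \<Rightarrow> bool" where
  "mdvd m m' \<longleftrightarrow> (\<forall>v. Poly_Mapping.lookup m v \<le> Poly_Mapping.lookup m' v)"

definition sqfree_mono :: "('v \<Rightarrow>\<^sub>0 nat) \<Rightarrow> bool" where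
  "sqfree_mono m \<longleftrightarrow> (\<forall>v. Poly_Mapping.lookup m v \<le> 1)"

definition gen_ideal :: "'a::comm_ring_1 set \<Rightarrow> 'a set" where
  "gen_ideal A = {\<Sum>a\<in>F. c a * a | F c. finite F \<and> F \<subseteq> A}"

definition colon :: "'a::comm_ring_1 set \<Rightarrow> 'a \<Rightarrow> 'a set" where
  "colon I f = {p. p * f \<in> I}"

definition monos_in :: "('v, 'k::field) mpoly set \<Rightarrow> ('v \<Rightarrow>\<^sub>0 nat) set" where
  "monos_in A = {m. mono m \<in> A}"

definition mingens :: "('v, 'k::field) mpoly set \<Rightarrow> ('v \<Rightarrow>\<^sub>0 nat) set" where
  "mingens A = {m \<in> monos_in A. \<forall>m'\<in>monos_in A. mdvd m' m \<longrightarrow> m' = m}"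

definition squarefree_monomial_ideal :: "('v, 'k::field) mpoly set \<Rightarrow> bool" where
  "squarefree_monomial_ideal I \<longleftrightarrow>
     (\<exists>G. finite G \<and> (\<forall>m\<in>G. sqfree_mono m) \<and> I = gen_ideal (mono ` G))"

text \<open>R = S/(x) identified with the subring of polynomials not involving x\<close>
definition subring_without :: "'v \<Rightarrow> ('v, 'k::field) mpoly set" where
  "subring_without x = {p. \<forall>m \<in> Poly_Mapping.keys p. Poly_Mapping.lookup m x = 0}"

text \<open>free module R^n: vectors nat => S with entries in R, zero beyond n\<close>
definition freemod :: "('v, 'k::field) mpoly set \<Rightarrow> nat \<Rightarrow> (nat \<Rightarrow> ('v, 'k) mpoly) set" where
  "freemod R n = {r. (\<forall>i<n. r i \<in> R) \<and> (\<forall>i\<ge>n. r i = 0)}"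

definition rspan :: "'a::comm_ring_1 set \<Rightarrow> (nat \<Rightarrow> 'a) set \<Rightarrow> (nat \<Rightarrow> 'a) set" where
  "rspan R C = {(\<lambda>i. \<Sum>c\<in>F. a c * c i) | F a. finite F \<and> F \<subseteq> C \<and> (\<forall>c\<in>F. a c \<in> R)}"

text \<open>the surjection R^n -> H = (I:x)/I, e_i |-> class of F_i, represented by a lift to S\<close>
definition lincomb :: "nat \<Rightarrow> (nat \<Rightarrow> 'a::comm_ring_1) \<Rightarrow> (nat \<Rightarrow> 'a) \<Rightarrow> 'a" where
  "lincomb n f r = (\<Sum>i<n. r i * f i)"

end

theory Submission
  imports Defs "HOL.Modules"
begin

text \<open>
  Since \<open>I\<close> is a monomial ideal, membership in \<open>I\<close> can be tested term by term, so
  both claims reduce to monomials.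

  Surjectivity: let \<open>u\<close> be a monomial with \<open>u x \<in> I\<close> but \<open>u \<notin> I\<close>. As the generators
  are squarefree, \<open>u\<close> does not involve \<open>x\<close>, and a minimal generator dividing \<open>u x\<close>
  must involve \<open>x\<close>; so it is some \<open>x F\<^sub>i\<close>, and \<open>u\<close> is an \<open>R\<close>-multiple of \<open>F\<^sub>i\<close>.

  Kernel: given \<open>r \<in> R\<^sup>n\<close> with \<open>\<Sum> r\<^sub>i F\<^sub>i \<in> I\<close>, split each \<open>r\<^sub>i\<close> into the terms \<open>u\<close>
  with \<open>u F\<^sub>i \<in> I\<close> and the rest. The former are multiples of minimal monomials of
  \<open>(I : F\<^sub>i) \<inter> R\<close>, i.e. combinations of columns of \<open>N\<close>. The latter contribute only
  monomials outside \<open>I\<close> to \<open>\<Sum> r\<^sub>i F\<^sub>i\<close>, so their contribution, which lies in \<open>I\<close>,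
  vanishes: they form a syzygy, a combination of columns of \<open>P\<close>.
\<close>

lemma module_mult: "module ((*) :: 'a::comm_ring_1 \<Rightarrow> 'a \<Rightarrow> 'a)"
  by unfold_locales (simp_all add: algebra_simps)

lemma gen_ideal_eq_span: "gen_ideal A = module.span (*) A"
  by (simp add: gen_ideal_def module.span_explicit[OF module_mult])

lemmas gen_ideal_0 = module.span_zero[OF module_mult, folded gen_ideal_eq_span]
  and gen_ideal_base = module.span_base[OF module_mult, folded gen_ideal_eq_span]
  and gen_ideal_mult = module.span_scale[OF module_mult, folded gen_ideal_eq_span]
  and gen_ideal_add = module.span_add[OF module_mult, folded gen_ideal_eq_span]
  and gen_ideal_diff = module.span_diff[OF module_mult, folded gen_ideal_eq_span]
  and gen_ideal_sum = module.span_sum[OF module_mult, folded gen_ideal_eq_span]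

lemma sum_in_add_closed:
  assumes "0 \<in> A" and "\<And>a b. a \<in> A \<Longrightarrow> b \<in> A \<Longrightarrow> a + b \<in> A"
    and "\<And>k. k \<in> K \<Longrightarrow> f k \<in> A"
  shows "sum f K \<in> A"
  using assms(3) by (induction K rule: infinite_finite_induct) (auto intro: assms(1,2))

definition unit_vec :: "nat \<Rightarrow> 'a::zero \<Rightarrow> nat \<Rightarrow> 'a" where
  "unit_vec i c = (\<lambda>j. if j = i then c else 0)"

lemma unit_vec_scale: "(\<lambda>j. a * unit_vec i c j) = unit_vec i (a * c :: 'a::mult_zero)"
  by (simp add: unit_vec_def fun_eq_iff)

lemma unit_vec_sum: "unit_vec i (sum f A) = (\<lambda>j. \<Sum>a\<in>A. unit_vec i (f a) j)"
  by (auto simp: unit_vec_def)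

lemma vec_eq_sum_unit_vec:
  assumes "\<forall>i\<ge>n. r i = 0"
  shows "r = (\<lambda>j. \<Sum>i<n. unit_vec i (r i) j)"
  using assms by (auto simp: unit_vec_def)

lemma lincomb_add: "lincomb n f (\<lambda>i. r i + s i) = lincomb n f r + lincomb n f s"
  by (simp add: lincomb_def distrib_right sum.distrib)

lemma lincomb_scale: "lincomb n f (\<lambda>i. a * r i) = a * lincomb n f r"
  by (simp add: lincomb_def sum_distrib_left mult.assoc)

lemma lincomb_unit_vec: "i < n \<Longrightarrow> lincomb n f (unit_vec i c) = c * f i"
  by (simp add: lincomb_def unit_vec_def if_distrib[of "\<lambda>a. a * _"] cong: if_cong)

locale subring =
  fixes R :: "'a::comm_ring_1 set"
  assumes zero_mem: "0 \<in> R" and one_mem: "1 \<in> R"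
    and add_mem: "a \<in> R \<Longrightarrow> b \<in> R \<Longrightarrow> a + b \<in> R"
    and mult_mem: "a \<in> R \<Longrightarrow> b \<in> R \<Longrightarrow> a * b \<in> R"
begin

lemma rspan_zero: "(\<lambda>i. 0) \<in> rspan R C"
  unfolding rspan_def by (auto intro!: exI[of _ "{}"])

lemma rspan_base: "c \<in> C \<Longrightarrow> c \<in> rspan R C"
  unfolding rspan_def using one_mem by (auto intro!: exI[of _ "{c}"] exI[of _ "\<lambda>_. 1"])

lemma rspan_scale:
  assumes "a \<in> R" and "u \<in> rspan R C"
  shows "(\<lambda>i. a * u i) \<in> rspan R C"
proof -
  obtain F b where u: "u = (\<lambda>i. \<Sum>c\<in>F. b c * c i)" "finite F" "F \<subseteq> C" "\<forall>c\<in>F. b c \<in> R"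
    using assms(2) unfolding rspan_def by blast
  have "(\<lambda>i. a * u i) = (\<lambda>i. \<Sum>c\<in>F. (a * b c) * c i)"
    unfolding u by (simp add: sum_distrib_left mult.assoc)
  then show ?thesis
    using u assms(1) mult_mem unfolding rspan_def by (auto intro!: exI[of _ F])
qed

lemma rspan_add:
  assumes "u \<in> rspan R C" and "w \<in> rspan R C"
  shows "(\<lambda>i. u i + w i) \<in> rspan R C"
proof -
  obtain F1 a1 F2 a2
    where u: "u = (\<lambda>i. \<Sum>c\<in>F1. a1 c * c i)" "finite F1" "F1 \<subseteq> C" "\<forall>c\<in>F1. a1 c \<in> R"
      and w: "w = (\<lambda>i. \<Sum>c\<in>F2. a2 c * c i)" "finite F2" "F2 \<subseteq> C" "\<forall>c\<in>F2. a2 c \<in> R"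
    using assms unfolding rspan_def by blast
  define a where "a c = (if c \<in> F1 then a1 c else 0) + (if c \<in> F2 then a2 c else 0)" for c
  have "(\<Sum>c\<in>F1 \<union> F2. a c * c i) = (\<Sum>c\<in>F1 \<union> F2. if c \<in> F1 then a1 c * c i else 0)
      + (\<Sum>c\<in>F1 \<union> F2. if c \<in> F2 then a2 c * c i else 0)" for i
    unfolding sum.distrib[symmetric] by (rule sum.cong) (auto simp: a_def distrib_right)
  also have "\<dots> i = u i + w i" for i
    using u w by (simp add: sum.inter_restrict[symmetric] Int_absorb1 Int_absorb2 Int_commute)
  finally have "(\<lambda>i. u i + w i) = (\<lambda>i. \<Sum>c\<in>F1 \<union> F2. a c * c i)"
    by simp
  moreover have "\<forall>c\<in>F1 \<union> F2. a c \<in> R"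
    using u w by (auto simp: a_def intro!: add_mem zero_mem)
  ultimately show ?thesis
    using u w unfolding rspan_def by (auto intro!: exI[of _ "F1 \<union> F2"] exI[of _ a])
qed

lemma rspan_mono: "C \<subseteq> D \<Longrightarrow> rspan R C \<subseteq> rspan R D"
  unfolding rspan_def by blast

lemma rspan_sum:
  "(\<And>k. k \<in> K \<Longrightarrow> f k \<in> rspan R C) \<Longrightarrow> (\<lambda>i. \<Sum>k\<in>K. f k i) \<in> rspan R C"
  by (induction K rule: infinite_finite_induct) (auto intro: rspan_zero rspan_add)

lemma rspan_minimal:
  assumes "C \<subseteq> M" and "(\<lambda>i. 0) \<in> M"
    and scale: "\<And>a u. a \<in> R \<Longrightarrow> u \<in> M \<Longrightarrow> (\<lambda>i. a * u i) \<in> M"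
    and add: "\<And>u w. u \<in> M \<Longrightarrow> w \<in> M \<Longrightarrow> (\<lambda>i. u i + w i) \<in> M"
  shows "rspan R C \<subseteq> M"
proof
  fix w assume "w \<in> rspan R C"
  then obtain F a where w: "w = (\<lambda>i. \<Sum>c\<in>F. a c * c i)" "finite F" "F \<subseteq> C" "\<forall>c\<in>F. a c \<in> R"
    unfolding rspan_def by blast
  have "F \<subseteq> C \<Longrightarrow> \<forall>c\<in>F. a c \<in> R \<Longrightarrow> (\<lambda>i. \<Sum>c\<in>F. a c * c i) \<in> M"
    using w(2)
  proof (induction F rule: finite_induct)
    case (insert c F)
    then have "(\<lambda>i. a c * c i) \<in> M" using scale assms(1) by blast
    with insert show ?case using add by fastforce
  qed (use assms(2) in simp)
  then show "w \<in> M" using w by blast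
qed

end

locale mpoly_subring = subring R for R :: "('v, 'k::field) mpoly set"
begin

lemma zero_in_freemod: "(\<lambda>i. 0) \<in> freemod R n"
  by (simp add: freemod_def zero_mem)

lemma freemod_add: "u \<in> freemod R n \<Longrightarrow> w \<in> freemod R n \<Longrightarrow> (\<lambda>i. u i + w i) \<in> freemod R n"
  by (simp add: freemod_def add_mem)

lemma freemod_scale: "a \<in> R \<Longrightarrow> u \<in> freemod R n \<Longrightarrow> (\<lambda>i. a * u i) \<in> freemod R n"
  by (simp add: freemod_def mult_mem)

lemma unit_vec_in_freemod: "i < n \<Longrightarrow> c \<in> R \<Longrightarrow> unit_vec i c \<in> freemod R n"
  by (simp add: freemod_def unit_vec_def zero_mem)

lemma rspan_lincomb_in_ideal:
  assumes "C \<subseteq> {r \<in> freemod R n. lincomb n f r \<in> gen_ideal A}"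
  shows "rspan R C \<subseteq> {r \<in> freemod R n. lincomb n f r \<in> gen_ideal A}"
proof (rule rspan_minimal)
  show "(\<lambda>i. 0) \<in> {r \<in> freemod R n. lincomb n f r \<in> gen_ideal A}"
    by (simp add: zero_in_freemod lincomb_def gen_ideal_0)
qed (use assms in \<open>auto simp: lincomb_add lincomb_scale
      intro: freemod_add freemod_scale gen_ideal_add gen_ideal_mult\<close>)

end

lemma mpoly_subring_subring_without: "mpoly_subring (subring_without x :: ('v, 'k::field) mpoly set)"
proof
  fix a b :: "('v, 'k) mpoly"
  assume a: "a \<in> subring_without x" and b: "b \<in> subring_without x"
  show "a + b \<in> subring_without x"
    using a b keys_add[of a b] unfolding subring_without_def by blast
  show "a * b \<in> subring_without x"
    using a b keys_mult[of a b] unfolding subring_without_def by (fastforce simp: lookup_add)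
qed (simp_all add: subring_without_def)

lemma keys_in_subring_without:
  "p \<in> subring_without x \<Longrightarrow> u \<in> Poly_Mapping.keys p \<Longrightarrow> Poly_Mapping.lookup u x = 0"
  unfolding subring_without_def by blast

lemma single_in_subring_without:
  "Poly_Mapping.lookup m x = 0 \<Longrightarrow> Poly_Mapping.single m c \<in> subring_without x"
  unfolding subring_without_def by simp

lemma subring_without_keys_subset:
  "Poly_Mapping.keys q \<subseteq> Poly_Mapping.keys p \<Longrightarrow> p \<in> subring_without x \<Longrightarrow> q \<in> subring_without x"
  unfolding subring_without_def by blast

definition restrict_keys :: "'a set \<Rightarrow> ('a \<Rightarrow>\<^sub>0 'b::comm_monoid_add) \<Rightarrow> 'a \<Rightarrow>\<^sub>0 'b" where
  "restrict_keys S p = (\<Sum>u\<in>Poly_Mapping.keys p \<inter> S. Poly_Mapping.single u (Poly_Mapping.lookup p u))"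

lemma lookup_restrict_keys:
  "Poly_Mapping.lookup (restrict_keys S p) u = (if u \<in> S then Poly_Mapping.lookup p u else 0)"
  by (simp add: restrict_keys_def lookup_sum lookup_single when_def in_keys_iff)

lemma keys_restrict_keys: "Poly_Mapping.keys (restrict_keys S p) = Poly_Mapping.keys p \<inter> S"
  by (auto simp: in_keys_iff lookup_restrict_keys split: if_splits)

lemma restrict_keys_add_compl: "restrict_keys S p + restrict_keys (- S) p = p"
  by (rule poly_mapping_eqI) (simp add: lookup_add lookup_restrict_keys)

lemma poly_mapping_sum_single:
  "p = (\<Sum>u\<in>Poly_Mapping.keys p. Poly_Mapping.single u (Poly_Mapping.lookup p u))"
proof -
  have "restrict_keys UNIV p = p"
    by (rule poly_mapping_eqI) (simp add: lookup_restrict_keys)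
  then show ?thesis by (simp add: restrict_keys_def)
qed

lemma mono_mult: "mono a * mono b = (mono (a + b) :: ('v, 'k::field) mpoly)"
  unfolding mono_def by (simp add: mult_single)

lemma single_mult_mono:
  "Poly_Mapping.single a c * mono b = (Poly_Mapping.single (a + b) c :: ('v, 'k::field) mpoly)"
  unfolding mono_def by (simp add: mult_single)

lemma lookup_mult_mono:
  "Poly_Mapping.lookup (p * mono m :: ('v, 'k::field) mpoly) (u + m) = Poly_Mapping.lookup p u"
proof -
  have "p * mono m = (\<Sum>w\<in>Poly_Mapping.keys p. Poly_Mapping.single (w + m) (Poly_Mapping.lookup p w))"
    by (subst poly_mapping_sum_single) (simp add: sum_distrib_right single_mult_mono)
  then show ?thesis
    by (simp add: lookup_sum lookup_single when_def in_keys_iff)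
qed

lemma keys_mult_mono:
  "Poly_Mapping.keys (p * mono m :: ('v, 'k::field) mpoly) = (\<lambda>u. u + m) ` Poly_Mapping.keys p"
proof
  show "Poly_Mapping.keys (p * mono m) \<subseteq> (\<lambda>u. u + m) ` Poly_Mapping.keys p"
    using keys_mult[of p "mono m"] by (auto simp: mono_def)
  show "(\<lambda>u. u + m) ` Poly_Mapping.keys p \<subseteq> Poly_Mapping.keys (p * mono m)"
    by (auto simp: in_keys_iff lookup_mult_mono)
qed

lemma mdvd_refl: "mdvd a a"
  by (simp add: mdvd_def)

lemma mdvd_trans: "mdvd a b \<Longrightarrow> mdvd b c \<Longrightarrow> mdvd a c"
  unfolding mdvd_def using order_trans by blast

lemma mdvd_add_left: "mdvd a (b + a)"
  by (simp add: mdvd_def lookup_add)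

lemma mdvd_diff_add: "mdvd a b \<Longrightarrow> b - a + a = b"
  unfolding mdvd_def by (intro poly_mapping_eqI) (simp add: lookup_add lookup_minus)

lemma mdvd_add_cancel: "mdvd (a + c) (b + c) \<longleftrightarrow> mdvd a b"
  by (simp add: mdvd_def lookup_add)

definition total_degree :: "('v \<Rightarrow>\<^sub>0 nat) \<Rightarrow> nat" where
  "total_degree m = sum (Poly_Mapping.lookup m) (Poly_Mapping.keys m)"

lemma total_degree_less:
  assumes "mdvd a b" and "a \<noteq> b"
  shows "total_degree a < total_degree b"
proof -
  have le: "Poly_Mapping.lookup a v \<le> Poly_Mapping.lookup b v" for v
    using assms(1) by (simp add: mdvd_def)
  obtain v where "Poly_Mapping.lookup a v \<noteq> Poly_Mapping.lookup b v"
    using assms(2) by (metis poly_mapping_eqI)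
  with le have lt: "Poly_Mapping.lookup a v < Poly_Mapping.lookup b v"
    using le_neq_implies_less by blast
  have keys: "Poly_Mapping.keys a \<subseteq> Poly_Mapping.keys b"
  proof
    fix v assume "v \<in> Poly_Mapping.keys a"
    then show "v \<in> Poly_Mapping.keys b" using le[of v] by (simp add: in_keys_iff)
  qed
  have "total_degree a = sum (Poly_Mapping.lookup a) (Poly_Mapping.keys b)"
    unfolding total_degree_def using keys by (intro sum.mono_neutral_left) (auto simp: in_keys_iff)
  also have "\<dots> < total_degree b"
    unfolding total_degree_def using le lt
    by (intro sum_strict_mono_ex1) (auto simp: in_keys_iff)
  finally show ?thesis .
qed

lemma mingens_divides:
  fixes A :: "('v, 'k::field) mpoly set"
  shows "m \<in> monos_in A \<Longrightarrow> \<exists>g\<in>mingens A. mdvd g m"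
proof (induction "total_degree m" arbitrary: m rule: less_induct)
  case less
  show ?case
  proof (cases "m \<in> mingens A")
    case True
    then show ?thesis using mdvd_refl by blast
  next
    case False
    then obtain m' where m': "m' \<in> monos_in A" "mdvd m' m" "m' \<noteq> m"
      using less.prems unfolding mingens_def by blast
    then obtain g where "g \<in> mingens A" "mdvd g m'"
      using less.hyps total_degree_less by blast
    then show ?thesis using mdvd_trans m'(2) by blast
  qed
qed

lemma keys_in_monomial_ideal:
  assumes "p \<in> gen_ideal (mono ` G :: ('v, 'k::field) mpoly set)" and "u \<in> Poly_Mapping.keys p"
  shows "\<exists>g\<in>G. mdvd g u"
proof -
  obtain F c where p: "p = (\<Sum>t\<in>F. c t * t)" "F \<subseteq> mono ` G"
    using assms(1) unfolding gen_ideal_def by blast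
  obtain t where t: "t \<in> F" "u \<in> Poly_Mapping.keys (c t * t)"
    using keys_sum[of "\<lambda>t. c t * t" F] assms(2) p(1) by blast
  obtain g where "g \<in> G" "t = mono g"
    using t(1) p(2) by blast
  then show ?thesis
    using t(2) keys_mult_mono[of "c t" g] mdvd_add_left by auto
qed

lemma single_in_monomial_ideal:
  assumes "g \<in> G" and "mdvd g u"
  shows "(Poly_Mapping.single u c :: ('v, 'k::field) mpoly) \<in> gen_ideal (mono ` G)"
proof -
  have "Poly_Mapping.single u c = Poly_Mapping.single (u - g) c * (mono g :: ('v, 'k) mpoly)"
    by (simp add: single_mult_mono mdvd_diff_add assms(2))
  then show ?thesis
    using assms(1) by (simp add: gen_ideal_mult gen_ideal_base)
qed

lemma in_monomial_ideal_iff: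
  "(p :: ('v, 'k::field) mpoly) \<in> gen_ideal (mono ` G) \<longleftrightarrow> (\<forall>u\<in>Poly_Mapping.keys p. \<exists>g\<in>G. mdvd g u)"
proof
  assume "\<forall>u\<in>Poly_Mapping.keys p. \<exists>g\<in>G. mdvd g u"
  then have "(\<Sum>u\<in>Poly_Mapping.keys p. Poly_Mapping.single u (Poly_Mapping.lookup p u)) \<in> gen_ideal (mono ` G)"
    by (intro gen_ideal_sum) (use single_in_monomial_ideal in blast)
  then show "p \<in> gen_ideal (mono ` G)"
    using poly_mapping_sum_single[of p] by simp
qed (use keys_in_monomial_ideal in blast)

lemma mono_in_monomial_ideal_iff:
  "(mono u :: ('v, 'k::field) mpoly) \<in> gen_ideal (mono ` G) \<longleftrightarrow> (\<exists>g\<in>G. mdvd g u)"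
  by (subst in_monomial_ideal_iff) (simp add: mono_def)

lemma in_monomial_ideal_iff_keys:
  "(p :: ('v, 'k::field) mpoly) \<in> gen_ideal (mono ` G) \<longleftrightarrow>
     (\<forall>u\<in>Poly_Mapping.keys p. (mono u :: ('v, 'k) mpoly) \<in> gen_ideal (mono ` G))"
  unfolding mono_in_monomial_ideal_iff by (rule in_monomial_ideal_iff)

lemma mult_mono_in_monomial_ideal_iff:
  "(p * mono m :: ('v, 'k::field) mpoly) \<in> gen_ideal (mono ` G) \<longleftrightarrow>
     (\<forall>u\<in>Poly_Mapping.keys p. (mono (u + m) :: ('v, 'k) mpoly) \<in> gen_ideal (mono ` G))"
  by (simp add: in_monomial_ideal_iff_keys[of "p * mono m"] keys_mult_mono)

lemma mingens_monomial_ideal_subset: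
  "mingens (gen_ideal (mono ` G) :: ('v, 'k::field) mpoly set) \<subseteq> G"
proof
  fix m assume m: "m \<in> mingens (gen_ideal (mono ` G) :: ('v, 'k) mpoly set)"
  then obtain g where g: "g \<in> G" "mdvd g m"
    unfolding mingens_def monos_in_def mono_in_monomial_ideal_iff by blast
  then have "g \<in> monos_in (gen_ideal (mono ` G) :: ('v, 'k) mpoly set)"
    unfolding monos_in_def mono_in_monomial_ideal_iff using mdvd_refl by blast
  then show "m \<in> G"
    using m g unfolding mingens_def by blast
qed


lemma single_in_monomial_ideal_if_mono:
  "(mono u :: ('v, 'k::field) mpoly) \<in> gen_ideal (mono ` G) \<Longrightarrow>
     (Poly_Mapping.single u c :: ('v, 'k) mpoly) \<in> gen_ideal (mono ` G)"
  unfolding mono_in_monomial_ideal_iff using single_in_monomial_ideal by blast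

lemma squarefree_colon_var:
  assumes sqf: "\<forall>g\<in>G. sqfree_mono g"
    and u: "(mono (u + Poly_Mapping.single x 1) :: ('v, 'k::field) mpoly) \<in> gen_ideal (mono ` G)"
    and pos: "Poly_Mapping.lookup u x > 0"
  shows "(mono u :: ('v, 'k) mpoly) \<in> gen_ideal (mono ` G)"
proof -
  obtain g where g: "g \<in> G" "mdvd g (u + Poly_Mapping.single x 1)"
    using u mono_in_monomial_ideal_iff by blast
  have "Poly_Mapping.lookup g v \<le> Poly_Mapping.lookup u v" for v
  proof (cases "v = x")
    case True
    have "Poly_Mapping.lookup g x \<le> 1"
      using sqf g(1) unfolding sqfree_mono_def by blast
    with pos True show ?thesis by simp
  next
    case False
    then show ?thesis
      using g(2) unfolding mdvd_def by (auto simp: lookup_add lookup_single dest: spec[of _ v])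
  qed
  then have "mdvd g u" by (simp add: mdvd_def)
  then show ?thesis using g(1) mono_in_monomial_ideal_iff by blast
qed

lemma colon_var_monomial_cases:
  fixes F :: "nat \<Rightarrow> 'v \<Rightarrow>\<^sub>0 nat"
  assumes I: "I = gen_ideal (mono ` G :: ('v, 'k::field) mpoly set)"
    and sqf: "\<forall>g\<in>G. sqfree_mono g"
    and gens: "{m \<in> mingens I. Poly_Mapping.lookup m x > 0} \<subseteq> (\<lambda>i. Poly_Mapping.single x 1 + F i) ` {..<n}"
    and u: "mono (u + Poly_Mapping.single x 1) \<in> I"
  shows "mono u \<in> I \<or> (\<exists>i<n. mdvd (F i) u \<and> Poly_Mapping.lookup u x = 0)"
proof (cases "Poly_Mapping.lookup u x > 0")
  case True
  then show ?thesis using squarefree_colon_var[OF sqf] u unfolding I by blast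
next
  case u_x: False
  obtain g where g: "g \<in> mingens I" "mdvd g (u + Poly_Mapping.single x 1)"
    using u mingens_divides unfolding monos_in_def by blast
  show ?thesis
  proof (cases "Poly_Mapping.lookup g x > 0")
    case True
    then obtain i where "i < n" "g = Poly_Mapping.single x 1 + F i"
      using g(1) gens by blast
    then have "mdvd (F i) u"
      using g(2) by (metis add.commute mdvd_add_cancel)
    then show ?thesis using u_x \<open>i < n\<close> by auto
  next
    case False
    then have "Poly_Mapping.lookup g v \<le> Poly_Mapping.lookup u v" for v
      using g(2) unfolding mdvd_def
      by (cases "v = x") (auto simp: lookup_add lookup_single dest: spec[of _ v])
    then have "mdvd g u" by (simp add: mdvd_def)
    moreover have "g \<in> G"
      using g(1) mingens_monomial_ideal_subset I by blast
    ultimately show ?thesis using I mono_in_monomial_ideal_iff by blast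
  qed
qed

lemma colon_var_lincomb_mod_ideal:
  fixes F :: "nat \<Rightarrow> 'v \<Rightarrow>\<^sub>0 nat"
  assumes I: "I = gen_ideal (mono ` G :: ('v, 'k::field) mpoly set)"
    and sqf: "\<forall>g\<in>G. sqfree_mono g"
    and gens: "{m \<in> mingens I. Poly_Mapping.lookup m x > 0} \<subseteq> (\<lambda>i. Poly_Mapping.single x 1 + F i) ` {..<n}"
    and p: "p \<in> colon I (mono (Poly_Mapping.single x 1))"
  shows "\<exists>r\<in>freemod (subring_without x) n. p - lincomb n (\<lambda>i. mono (F i)) r \<in> I"
proof -
  interpret mpoly_subring "subring_without x :: ('v, 'k) mpoly set"
    by (rule mpoly_subring_subring_without)
  define Lift where
    "Lift = {q. \<exists>r\<in>freemod (subring_without x) n. q - lincomb n (\<lambda>i. mono (F i)) r \<in> I}"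
  have "0 \<in> Lift"
    unfolding Lift_def using zero_in_freemod I gen_ideal_0
    by (intro CollectI bexI[of _ "\<lambda>i. 0"]) (simp_all add: lincomb_def)
  moreover have "q + q' \<in> Lift" if q: "q \<in> Lift" and q': "q' \<in> Lift" for q q'
  proof -
    obtain r r' where r: "r \<in> freemod (subring_without x) n" "q - lincomb n (\<lambda>i. mono (F i)) r \<in> I"
      and r': "r' \<in> freemod (subring_without x) n" "q' - lincomb n (\<lambda>i. mono (F i)) r' \<in> I"
      using q q' unfolding Lift_def by blast
    have "q + q' - lincomb n (\<lambda>i. mono (F i)) (\<lambda>i. r i + r' i)
        = (q - lincomb n (\<lambda>i. mono (F i)) r) + (q' - lincomb n (\<lambda>i. mono (F i)) r')"
      by (simp add: lincomb_add)
    also have "\<dots> \<in> I"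
      using r(2) r'(2) unfolding I by (rule gen_ideal_add)
    finally show ?thesis
      unfolding Lift_def using freemod_add[OF r(1) r'(1)] by blast
  qed
  moreover have "Poly_Mapping.single u c \<in> Lift" if "mono (u + Poly_Mapping.single x 1) \<in> I" for u c
    using colon_var_monomial_cases[OF I sqf gens that]
  proof
    assume "mono u \<in> I"
    then have "Poly_Mapping.single u c \<in> I"
      using I single_in_monomial_ideal_if_mono by blast
    then show ?thesis
      unfolding Lift_def using zero_in_freemod
      by (intro CollectI bexI[of _ "\<lambda>i. 0"]) (simp_all add: lincomb_def)
  next
    assume "\<exists>i<n. mdvd (F i) u \<and> Poly_Mapping.lookup u x = 0"
    then obtain i where i: "i < n" "mdvd (F i) u" "Poly_Mapping.lookup u x = 0"
      by blast
    define r where "r = unit_vec i (Poly_Mapping.single (u - F i) c)"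
    have "r \<in> freemod (subring_without x) n"
      unfolding r_def using i by (auto intro!: unit_vec_in_freemod single_in_subring_without
          simp: lookup_minus)
    moreover have "lincomb n (\<lambda>i. mono (F i)) r = Poly_Mapping.single u c"
      unfolding r_def using i by (simp add: lincomb_unit_vec single_mult_mono mdvd_diff_add)
    ultimately show ?thesis
      unfolding Lift_def I by (auto intro!: bexI[of _ r] gen_ideal_0)
  qed
  moreover have "\<forall>u\<in>Poly_Mapping.keys p. mono (u + Poly_Mapping.single x 1) \<in> I"
    using p I unfolding colon_def by (simp add: mult_mono_in_monomial_ideal_iff)
  ultimately have "(\<Sum>u\<in>Poly_Mapping.keys p. Poly_Mapping.single u (Poly_Mapping.lookup p u)) \<in> Lift"
    by (intro sum_in_add_closed) auto
  then show ?thesis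
    unfolding Lift_def by (subst poly_mapping_sum_single) simp
qed


lemma unit_vec_in_rspan_mingens:
  fixes C :: "(nat \<Rightarrow> ('v, 'k::field) mpoly) set"
  assumes I: "I = gen_ideal (mono ` G :: ('v, 'k) mpoly set)"
    and cols: "\<And>m. m \<in> mingens (colon I (mono f) \<inter> subring_without x) \<Longrightarrow> unit_vec i (mono m) \<in> C"
    and q: "q \<in> subring_without x" and qf: "q * mono f \<in> I"
  shows "unit_vec i q \<in> rspan (subring_without x) C"
proof -
  interpret mpoly_subring "subring_without x :: ('v, 'k) mpoly set"
    by (rule mpoly_subring_subring_without)
  have "unit_vec i (Poly_Mapping.single u (Poly_Mapping.lookup q u)) \<in> rspan (subring_without x) C"
    if u: "u \<in> Poly_Mapping.keys q" for u
  proof -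
    have u_x: "Poly_Mapping.lookup u x = 0"
      using q u by (rule keys_in_subring_without)
    have "mono u * mono f \<in> I"
      using qf u unfolding I by (simp add: mult_mono_in_monomial_ideal_iff mono_mult)
    moreover have "mono u \<in> subring_without x"
      unfolding mono_def using u_x by (rule single_in_subring_without)
    ultimately have "u \<in> monos_in (colon I (mono f) \<inter> subring_without x)"
      unfolding monos_in_def colon_def by simp
    then obtain g where g: "g \<in> mingens (colon I (mono f) \<inter> subring_without x)" "mdvd g u"
      using mingens_divides by blast
    have "Poly_Mapping.single (u - g) (Poly_Mapping.lookup q u) \<in> subring_without x"
      using u_x by (intro single_in_subring_without) (simp add: lookup_minus)
    from rspan_scale[OF this rspan_base[OF cols[OF g(1)]]]
    show ?thesis
      by (simp add: unit_vec_scale single_mult_mono mdvd_diff_add g(2))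
  qed
  then have "(\<lambda>j. \<Sum>u\<in>Poly_Mapping.keys q. unit_vec i (Poly_Mapping.single u (Poly_Mapping.lookup q u)) j)
      \<in> rspan (subring_without x) C"
    by (rule rspan_sum)
  then show ?thesis
    by (subst poly_mapping_sum_single) (simp add: unit_vec_sum)
qed

lemma lincomb_in_monomial_ideal_in_rspan:
  fixes F :: "nat \<Rightarrow> 'v \<Rightarrow>\<^sub>0 nat" and r :: "nat \<Rightarrow> ('v, 'k::field) mpoly"
  defines "Fp \<equiv> \<lambda>i. mono (F i) :: ('v, 'k) mpoly"
  assumes I: "I = gen_ideal (mono ` G)"
    and cols: "\<And>i m. i < n \<Longrightarrow> m \<in> mingens (colon I (Fp i) \<inter> subring_without x) \<Longrightarrow>
      unit_vec i (mono m) \<in> C"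
    and syz: "{s \<in> freemod (subring_without x) n. lincomb n Fp s = 0} \<subseteq> rspan (subring_without x) C"
    and r: "r \<in> freemod (subring_without x) n" "lincomb n Fp r \<in> I"
  shows "r \<in> rspan (subring_without x) C"
proof -
  interpret mpoly_subring "subring_without x :: ('v, 'k) mpoly set"
    by (rule mpoly_subring_subring_without)
  define S where "S i = {u. mono (u + F i) \<in> I}" for i
  define good where "good i = (if i < n then restrict_keys (S i) (r i) else 0)" for i
  define bad where "bad i = (if i < n then restrict_keys (- S i) (r i) else 0)" for i
  have r_split: "r = (\<lambda>i. good i + bad i)"
    using r(1) by (auto simp: freemod_def good_def bad_def restrict_keys_add_compl)
  have good_R: "good i \<in> subring_without x" and bad_R: "bad i \<in> subring_without x" for i
    using r(1) unfolding good_def bad_def freemod_def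
    by (auto intro: subring_without_keys_subset[rotated] zero_mem simp: keys_restrict_keys)
  have good_F: "good i * Fp i \<in> I" for i
    unfolding good_def Fp_def I
    by (auto simp: mult_mono_in_monomial_ideal_iff keys_restrict_keys S_def I gen_ideal_0)
  have "good \<in> rspan (subring_without x) C"
  proof (subst vec_eq_sum_unit_vec)
    show "\<forall>i\<ge>n. good i = 0" by (simp add: good_def)
    show "(\<lambda>j. \<Sum>i<n. unit_vec i (good i) j) \<in> rspan (subring_without x) C"
      using I cols good_R good_F unfolding Fp_def
      by (intro rspan_sum unit_vec_in_rspan_mingens) auto
  qed
  moreover have "bad \<in> rspan (subring_without x) C"
  proof -
    have "lincomb n Fp good \<in> I"
      unfolding lincomb_def I using good_F unfolding I by (intro gen_ideal_sum)
    then have "lincomb n Fp r - lincomb n Fp good \<in> I"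
      using r(2) unfolding I by (rule gen_ideal_diff[rotated])
    then have bad_I: "lincomb n Fp bad \<in> I"
      by (subst (asm) r_split) (simp add: lincomb_add)
    have "mono w \<notin> I" if w: "w \<in> Poly_Mapping.keys (lincomb n Fp bad)" for w
    proof -
      obtain i where "i < n" "w \<in> Poly_Mapping.keys (bad i * Fp i)"
        using w keys_sum[of "\<lambda>i. bad i * Fp i" "{..<n}"] unfolding lincomb_def by blast
      then show ?thesis
        by (auto simp: bad_def Fp_def keys_mult_mono keys_restrict_keys S_def)
    qed
    with bad_I have "lincomb n Fp bad = 0"
      unfolding I in_monomial_ideal_iff_keys[of "lincomb n Fp bad"] by (metis keys_eq_empty ex_in_conv)
    moreover have "bad \<in> freemod (subring_without x) n"
      using bad_R by (simp add: freemod_def) (simp add: bad_def)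
    ultimately show ?thesis using syz by blast
  qed
  ultimately show ?thesis
    by (subst r_split) (rule rspan_add)
qed


lemma rspan_columns_eq_lincomb_in_ideal:
  fixes I :: "('v, 'k::field) mpoly set" and x :: 'v and n :: nat
    and F :: "nat \<Rightarrow> 'v \<Rightarrow>\<^sub>0 nat" and P :: "(nat \<Rightarrow> ('v, 'k) mpoly) set"
  defines "R \<equiv> subring_without x" and "Fp \<equiv> \<lambda>i. mono (F i) :: ('v, 'k) mpoly"
  defines "N \<equiv> {unit_vec i (mono m) | i m. i < n \<and> m \<in> mingens (colon I (Fp i) \<inter> R)}"
  assumes I: "I = gen_ideal (mono ` G)"
    and P: "rspan R P = {r \<in> freemod R n. lincomb n Fp r = 0}"
  shows "rspan R (N \<union> P) = {r \<in> freemod R n. lincomb n Fp r \<in> I}"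
proof -
  interpret mpoly_subring R
    unfolding R_def by (rule mpoly_subring_subring_without)
  have "N \<subseteq> {r \<in> freemod R n. lincomb n Fp r \<in> I}"
    unfolding N_def mingens_def monos_in_def colon_def
    by (auto simp: lincomb_unit_vec intro: unit_vec_in_freemod)
  moreover have "P \<subseteq> {r \<in> freemod R n. lincomb n Fp r \<in> I}"
  proof
    fix c assume "c \<in> P"
    then have "c \<in> rspan R P" by (rule rspan_base)
    then show "c \<in> {r \<in> freemod R n. lincomb n Fp r \<in> I}"
      unfolding P I using gen_ideal_0 by simp
  qed
  ultimately have "rspan R (N \<union> P) \<subseteq> {r \<in> freemod R n. lincomb n Fp r \<in> I}"
    unfolding I by (intro rspan_lincomb_in_ideal) blast
  moreover have "{r \<in> freemod R n. lincomb n Fp r \<in> I} \<subseteq> rspan R (N \<union> P)"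
  proof -
    have "{s \<in> freemod R n. lincomb n Fp s = 0} \<subseteq> rspan R (N \<union> P)"
      using P rspan_mono[of P "N \<union> P"] by blast
    moreover have "\<And>i m. i < n \<Longrightarrow> m \<in> mingens (colon I (Fp i) \<inter> R) \<Longrightarrow>
        unit_vec i (mono m) \<in> N \<union> P"
      unfolding N_def by blast
    ultimately show ?thesis
      using lincomb_in_monomial_ideal_in_rspan[OF I, where n=n and F=F and x=x and C="N \<union> P"]
      unfolding R_def Fp_def by blast
  qed
  ultimately show ?thesis by blast
qed

theorem theorem3p4:
  fixes I :: "('v::finite, 'k::field) mpoly set"
    and x :: 'v and n :: nat and F :: "nat \<Rightarrow> ('v \<Rightarrow>\<^sub>0 nat)"
    and P :: "(nat \<Rightarrow> ('v, 'k) mpoly) set"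
  defines "R \<equiv> subring_without x"
  defines "Fp \<equiv> (\<lambda>i. mono (F i) :: ('v, 'k) mpoly)"
  defines "Ncols \<equiv> {(\<lambda>j. if j = i then mono m else 0) | i m.
                      i < n \<and> m \<in> mingens (colon I (Fp i) \<inter> R)}"
  defines "Syz \<equiv> {r \<in> freemod R n. lincomb n Fp r = 0}"
  assumes sqf: "squarefree_monomial_ideal I"
    and Finj: "inj_on F {..<n}"
    and Fgens: "(\<lambda>i. Poly_Mapping.single x 1 + F i) ` {..<n} = {m \<in> mingens I. Poly_Mapping.lookup m x > 0}"
    and Pfin: "finite P"
    and Psyz: "P \<subseteq> Syz"
    and Pgen: "rspan R P = Syz"
    and Pmin: "\<forall>Q. Q \<subset> P \<longrightarrow> rspan R Q \<noteq> Syz"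
  shows "(\<forall>p \<in> colon I (mono (Poly_Mapping.single x 1)).
            \<exists>r \<in> freemod R n. p - lincomb n Fp r \<in> I)
       \<and> rspan R (Ncols \<union> P) = {r \<in> freemod R n. lincomb n Fp r \<in> I}"
proof
  obtain G where G: "\<forall>m\<in>G. sqfree_mono m" and I: "I = gen_ideal (mono ` G)"
    using sqf unfolding squarefree_monomial_ideal_def by blast
  show "\<forall>p \<in> colon I (mono (Poly_Mapping.single x 1)). \<exists>r \<in> freemod R n. p - lincomb n Fp r \<in> I"
    using colon_var_lincomb_mod_ideal[OF I G] Fgens unfolding R_def Fp_def by auto
  have "Ncols = {unit_vec i (mono m) | i m. i < n \<and> m \<in> mingens (colon I (Fp i) \<inter> R)}"
    unfolding Ncols_def unit_vec_def ..
  then show "rspan R (Ncols \<union> P) = {r \<in> freemod R n. lincomb n Fp r \<in> I}"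
    using rspan_columns_eq_lincomb_in_ideal[OF I, where x=x and n=n and F=F and P=P] Pgen
    unfolding R_def Fp_def Syz_def by simp
qed

end
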